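(* For every tree $T$ on $n$ vertices, $\operatorname{diam}(\mathcal{C}_3(T))\ge\lfloor 3n/2\rfloor$.
   Context: A proper 3-coloring of a tree $T=(V,E)$ is a map $f\colon V\to\mathbb{Z}/3\mathbb{Z}$ with $f(u)\neq f(v)$ for every edge $uv\in E$. The 3-coloring graph $\mathcal{C}_3(T)$ has the proper 3-colorings as vertices, two colorings adjacent iff they differ at exactly one vertex; $\operatorname{diam}$ denotes graph diameter. *)

theory Defs
  imports Main "HOL-Library.FuncSet" "HOL-Library.Extended_Nat"
begin

definition adj :: "'a set set \<Rightarrow> 'a \<Rightarrow> 'a \<Rightarrow> bool" where
  "adj E u v \<longleftrightarrow> u \<noteq> v \<and> {u, v} \<in> E"

definition simple_graph :: "'a set \<Rightarrow> 'a set set \<Rightarrow> bool" where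
  "simple_graph V E \<longleftrightarrow> finite V \<and> (\<forall>e\<in>E. \<exists>u v. u \<in> V \<and> v \<in> V \<and> u \<noteq> v \<and> e = {u, v})"

definition connected_graph :: "'a set \<Rightarrow> 'a set set \<Rightarrow> bool" where
  "connected_graph V E \<longleftrightarrow> (\<forall>u\<in>V. \<forall>v\<in>V. (u, v) \<in> {(x, y). adj E x y}\<^sup>*)"

definition is_cycle :: "'a set \<Rightarrow> 'a set set \<Rightarrow> 'a list \<Rightarrow> bool" where
  "is_cycle V E cs \<longleftrightarrow> length cs \<ge> 3 \<and> distinct cs \<and> set cs \<subseteq> V \<and>
     (\<forall>i < length cs. adj E (cs ! i) (cs ! ((i + 1) mod length cs)))"

definition acyclic_graph :: "'a set \<Rightarrow> 'a set set \<Rightarrow> bool" where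
  "acyclic_graph V E \<longleftrightarrow> (\<nexists>cs. is_cycle V E cs)"

definition tree :: "'a set \<Rightarrow> 'a set set \<Rightarrow> bool" where
  "tree V E \<longleftrightarrow> simple_graph V E \<and> V \<noteq> {} \<and> connected_graph V E \<and> acyclic_graph V E"

text \<open>Proper 3-colourings, colours Z/3Z represented by {0,1,2}; maps are extensional on V.\<close>
definition colorings3 :: "'a set \<Rightarrow> 'a set set \<Rightarrow> ('a \<Rightarrow> nat) set" where
  "colorings3 V E = {f \<in> V \<rightarrow>\<^sub>E {0, 1, 2}. \<forall>u\<in>V. \<forall>v\<in>V. adj E u v \<longrightarrow> f u \<noteq> f v}"

definition col_adj :: "'a set \<Rightarrow> ('a \<Rightarrow> nat) \<Rightarrow> ('a \<Rightarrow> nat) \<Rightarrow> bool" where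
  "col_adj V f g \<longleftrightarrow> card {v \<in> V. f v \<noteq> g v} = 1"

definition col_walk :: "'a set \<Rightarrow> 'a set set \<Rightarrow> nat \<Rightarrow> ('a \<Rightarrow> nat) \<Rightarrow> ('a \<Rightarrow> nat) \<Rightarrow> bool" where
  "col_walk V E k f g \<longleftrightarrow> (\<exists>ps. length ps = Suc k \<and> hd ps = f \<and> last ps = g \<and>
     set ps \<subseteq> colorings3 V E \<and> (\<forall>i < k. col_adj V (ps ! i) (ps ! Suc i)))"

text \<open>Graph distance (infinite if not connected) and diameter of the colouring graph.\<close>
definition col_dist :: "'a set \<Rightarrow> 'a set set \<Rightarrow> ('a \<Rightarrow> nat) \<Rightarrow> ('a \<Rightarrow> nat) \<Rightarrow> enat" where
  "col_dist V E f g = (INF k \<in> {k. col_walk V E k f g}. enat k)"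

definition col_diam :: "'a set \<Rightarrow> 'a set set \<Rightarrow> enat" where
  "col_diam V E = (SUP f \<in> colorings3 V E. SUP g \<in> colorings3 V E. col_dist V E f g)"

end

theory Submission
  imports Defs
begin

text \<open>Follow a recolouring walk and lift the colour of each vertex to an integer height:
  it starts at the colour and moves by \<open>+1\<close> or \<open>-1\<close> whenever the colour does so modulo 3.
  Adjacent heights never differ by a multiple of 3, and only one vertex moves per step, so the
  height difference across an edge never crosses a multiple of 3.

  Choose a set \<open>S\<close> of \<open>\<lfloor>n/2\<rfloor>\<close> vertices, \<open>w = 1\<close> on \<open>S\<close> and \<open>w = 2\<close> elsewhere, and proper
  colourings \<open>f\<close>, \<open>g = f + w\<close> of the tree (they exist by removing a leaf). Along any walk
  from \<open>f\<close> to \<open>g\<close> the height of \<open>v\<close> changes by \<open>w v\<close> modulo 3 and, across each edge, the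
  changes differ by at most one; hence by connectedness they all equal \<open>w v + 3j\<close> for a common
  \<open>j\<close>. Each step moves one height by one, so the walk has length at least
  \<open>\<Sum>\<^sub>v |w v + 3j| \<ge> 2\<lfloor>n/2\<rfloor> + \<lceil>n/2\<rceil> = \<lfloor>3n/2\<rfloor>\<close>.\<close>

lemma adj_sym: "adj E u v \<longleftrightarrow> adj E v u"
  unfolding adj_def by (auto simp: insert_commute)

lemma adj_in_vertices:
  assumes "simple_graph V E" "adj E u v"
  shows "u \<in> V" "v \<in> V"
  using assms unfolding simple_graph_def adj_def by (auto simp: doubleton_eq_iff)

lemma connected_graph_locally_constant:
  assumes "simple_graph V E" "connected_graph V E"
    and const: "\<And>u v. u \<in> V \<Longrightarrow> v \<in> V \<Longrightarrow> adj E u v \<Longrightarrow> D u = D v"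
    and "u \<in> V" "v \<in> V"
  shows "D v = D u"
proof -
  have "(u, v) \<in> {(x, y). adj E x y}\<^sup>*"
    using assms(2,4,5) unfolding connected_graph_def by blast
  then show ?thesis
  proof (induction rule: rtrancl_induct)
    case (step y z)
    then show ?case using const adj_in_vertices[OF assms(1)] by fastforce
  qed simp
qed

definition simple_path :: "'a set \<Rightarrow> 'a set set \<Rightarrow> 'a list \<Rightarrow> bool" where
  "simple_path V E xs \<longleftrightarrow> xs \<noteq> [] \<and> distinct xs \<and> set xs \<subseteq> V \<and>
     (\<forall>i. Suc i < length xs \<longrightarrow> adj E (xs ! i) (xs ! Suc i))"

lemma simple_path_length_le:
  assumes "simple_path V E xs" "finite V"
  shows "length xs \<le> card V"
proof -
  have "length xs = card (set xs)"
    using assms(1) unfolding simple_path_def by (simp add: distinct_card)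
  also have "\<dots> \<le> card V"
    using assms unfolding simple_path_def by (simp add: card_mono)
  finally show ?thesis .
qed

lemma simple_path_chord_is_cycle:
  assumes xs: "simple_path V E xs" and j: "2 \<le> j" "j < length xs"
    and chord: "adj E (xs ! 0) (xs ! j)"
  shows "is_cycle V E (take (Suc j) xs)"
  unfolding is_cycle_def
proof (intro conjI allI impI)
  let ?cs = "take (Suc j) xs"
  have len: "length ?cs = Suc j" using j by simp
  show "3 \<le> length ?cs" "distinct ?cs" "set ?cs \<subseteq> V"
    using xs j len unfolding simple_path_def by (auto dest: in_set_takeD)
  fix i assume "i < length ?cs"
  then consider "i < j" | "i = j" using len by linarith
  then show "adj E (?cs ! i) (?cs ! ((i + 1) mod length ?cs))"
  proof cases
    case 1
    then show ?thesis using xs j unfolding len simple_path_def by simp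
  next
    case 2
    then show ?thesis using chord adj_sym[of E] unfolding len by simp
  qed
qed

text \<open>The first vertex of a longest simple path has no neighbour off the path, and a
  neighbour further along the path would close a cycle.\<close>

lemma acyclic_graph_low_degree_vertex:
  assumes sg: "simple_graph V E" and ac: "acyclic_graph V E" and "V \<noteq> {}"
  obtains l where "l \<in> V" "\<And>y z. adj E l y \<Longrightarrow> adj E l z \<Longrightarrow> y = z"
proof -
  obtain v where "v \<in> V" using \<open>V \<noteq> {}\<close> by blast
  then have "simple_path V E [v]" by (simp add: simple_path_def)
  moreover have "length ys < Suc (card V)" if "simple_path V E ys" for ys
    using simple_path_length_le[OF that] sg unfolding simple_graph_def by simp
  ultimately obtain xs where xs: "simple_path V E xs"
    and longest: "\<And>ys. simple_path V E ys \<Longrightarrow> length ys \<le> length xs"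
    using ex_has_greatest_nat[of "simple_path V E" "[v]" length] by blast
  have neighbour: "y = xs ! 1" if y: "adj E (xs ! 0) y" for y
  proof -
    have "y \<in> set xs"
    proof (rule ccontr)
      assume "y \<notin> set xs"
      then have "simple_path V E (y # xs)"
        using xs y adj_in_vertices[OF sg y] adj_sym[of E]
        unfolding simple_path_def by (auto simp: nth_Cons split: nat.splits)
      then show False using longest by fastforce
    qed
    then obtain j where j: "j < length xs" "y = xs ! j" by (auto simp: in_set_conv_nth)
    moreover have "j \<noteq> 0" using y j adj_def by metis
    moreover have "\<not> 2 \<le> j"
      using simple_path_chord_is_cycle[OF xs _ j(1)] y j ac unfolding acyclic_graph_def by blast
    ultimately show ?thesis by (metis One_nat_def less_2_cases not_le)
  qed
  show thesis
  proof
    show "xs ! 0 \<in> V" using xs unfolding simple_path_def by (auto simp: subset_iff)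
  qed (metis neighbour)
qed

lemma adj_delete_vertex:
  "adj {e \<in> E. l \<notin> e} u v \<longleftrightarrow> adj E u v \<and> u \<noteq> l \<and> v \<noteq> l"
  unfolding adj_def by auto

lemma simple_graph_delete_vertex:
  "simple_graph V E \<Longrightarrow> simple_graph (V - {l}) {e \<in> E. l \<notin> e}"
  unfolding simple_graph_def by fastforce

lemma acyclic_graph_delete_vertex:
  "acyclic_graph V E \<Longrightarrow> acyclic_graph (V - {l}) {e \<in> E. l \<notin> e}"
  unfolding acyclic_graph_def is_cycle_def adj_delete_vertex by blast

lemma colorings3_less_3: "f \<in> colorings3 V E \<Longrightarrow> v \<in> V \<Longrightarrow> f v < 3"
  unfolding colorings3_def by (force simp: PiE_iff)

lemma colorings3_adj_neq:
  "f \<in> colorings3 V E \<Longrightarrow> u \<in> V \<Longrightarrow> v \<in> V \<Longrightarrow> adj E u v \<Longrightarrow> f u \<noteq> f v"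
  unfolding colorings3_def by blast

lemma colorings3_extend:
  assumes f: "f \<in> colorings3 (V - {l}) {e \<in> E. l \<notin> e}" and "l \<in> V" "c < 3"
    and avoid: "\<And>y. adj E l y \<Longrightarrow> c \<noteq> f y"
  shows "f(l := c) \<in> colorings3 V E"
proof -
  have "f(l := c) \<in> insert l (V - {l}) \<rightarrow>\<^sub>E {0, 1, 2}"
    using f \<open>c < 3\<close> unfolding colorings3_def by (intro PiE_fun_upd) auto
  then have "f(l := c) \<in> V \<rightarrow>\<^sub>E {0, 1, 2}"
    using \<open>l \<in> V\<close> by (simp add: insert_absorb)
  moreover have "(f(l := c)) u \<noteq> (f(l := c)) v" if "u \<in> V" "v \<in> V" "adj E u v" for u v
  proof -
    have "u \<noteq> v" using \<open>adj E u v\<close> by (simp add: adj_def)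
    then show ?thesis
      using that f avoid adj_sym[of E] unfolding colorings3_def adj_delete_vertex
      by (cases "u = l"; cases "v = l") auto
  qed
  ultimately show ?thesis unfolding colorings3_def by blast
qed

lemma ex_color_avoiding: "\<exists>c::nat. c < 3 \<and> c \<noteq> a \<and> (c + s) mod 3 \<noteq> b"
  by presburger

lemma shifted_colorings3_exist:
  assumes "simple_graph V E" "acyclic_graph V E"
  obtains f g where "f \<in> colorings3 V E" "g \<in> colorings3 V E"
    "\<forall>v\<in>V. g v = (f v + w v) mod 3"
  using assms
proof (induction "card V" arbitrary: V E thesis)
  case 0
  then have "V = {}" unfolding simple_graph_def by simp
  then show ?case using "0.prems"(1)[of "\<lambda>_. undefined" "\<lambda>_. undefined"]
    unfolding colorings3_def by simp
next
  case (Suc m)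
  then have "V \<noteq> {}" by auto
  with Suc.prems obtain l where l: "l \<in> V" and deg: "\<And>y z. adj E l y \<Longrightarrow> adj E l z \<Longrightarrow> y = z"
    by (metis acyclic_graph_low_degree_vertex)
  let ?V = "V - {l}" and ?E = "{e \<in> E. l \<notin> e}"
  have "m = card ?V" using Suc.hyps(2) l by simp
  then obtain f g where f: "f \<in> colorings3 ?V ?E" and g: "g \<in> colorings3 ?V ?E"
    and shift: "\<forall>v\<in>?V. g v = (f v + w v) mod 3"
    using Suc.hyps(1)[OF \<open>m = card ?V\<close>] simple_graph_delete_vertex[OF Suc.prems(2)]
      acyclic_graph_delete_vertex[OF Suc.prems(3)] by blast
  obtain c :: nat where "c < 3"
    and c: "\<And>y. adj E l y \<Longrightarrow> c \<noteq> f y \<and> (c + w l) mod 3 \<noteq> g y"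
  proof (cases "\<exists>y. adj E l y")
    case True
    then obtain y where "adj E l y" by blast
    moreover obtain c :: nat where "c < 3" "c \<noteq> f y" "(c + w l) mod 3 \<noteq> g y"
      using ex_color_avoiding by blast
    ultimately show ?thesis using that deg by metis
  qed (use that[of 0] in auto)
  show ?case
  proof (rule Suc.prems(1))
    show "f(l := c) \<in> colorings3 V E" "g(l := (c + w l) mod 3) \<in> colorings3 V E"
      using colorings3_extend[OF f l] colorings3_extend[OF g l] \<open>c < 3\<close> c by auto
    show "\<forall>v\<in>V. (g(l := (c + w l) mod 3)) v = ((f(l := c)) v + w v) mod 3"
      using shift by auto
  qed
qed

lemma col_adj_fixes_one_of:
  assumes "col_adj V f g" "finite V" "u \<in> V" "v \<in> V" "u \<noteq> v"
  shows "f u = g u \<or> f v = g v"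
proof (rule ccontr)
  assume "\<not> ?thesis"
  then have "{u, v} \<subseteq> {x \<in> V. f x \<noteq> g x}" using assms(3,4) by auto
  then have "card {u, v} \<le> 1"
    using assms(1,2) card_mono[of "{x \<in> V. f x \<noteq> g x}"] unfolding col_adj_def by simp
  then show False using \<open>u \<noteq> v\<close> by simp
qed

definition recoloring_seq :: "'a set \<Rightarrow> 'a set set \<Rightarrow> (nat \<Rightarrow> 'a \<Rightarrow> nat) \<Rightarrow> nat \<Rightarrow> bool" where
  "recoloring_seq V E p k \<longleftrightarrow>
     (\<forall>i\<le>k. p i \<in> colorings3 V E) \<and> (\<forall>i<k. col_adj V (p i) (p (Suc i)))"

lemma recoloring_seq_colorings3:
  "recoloring_seq V E p k \<Longrightarrow> i \<le> k \<Longrightarrow> p i \<in> colorings3 V E"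
  unfolding recoloring_seq_def by blast

lemma recoloring_seq_less_3:
  "recoloring_seq V E p k \<Longrightarrow> i \<le> k \<Longrightarrow> v \<in> V \<Longrightarrow> p i v < 3"
  using recoloring_seq_colorings3 colorings3_less_3 by metis

lemma col_walk_recoloring_seq:
  assumes "col_walk V E k f g"
  obtains p where "recoloring_seq V E p k" "p 0 = f" "p k = g"
proof -
  obtain ps where ps: "length ps = Suc k" "hd ps = f" "last ps = g" "set ps \<subseteq> colorings3 V E"
    "\<forall>i<k. col_adj V (ps ! i) (ps ! Suc i)"
    using assms unfolding col_walk_def by blast
  show thesis
  proof
    show "recoloring_seq V E (nth ps) k"
      using ps(1,4,5) unfolding recoloring_seq_def by (auto intro: nth_mem)
    show "ps ! 0 = f" using ps(1,2) by (cases ps) auto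
    show "ps ! k = g" using ps(1,3) last_conv_nth[of ps] by (cases ps) auto
  qed
qed

definition col_lift :: "nat \<Rightarrow> nat \<Rightarrow> int" where
  "col_lift a b = (if b = (a + 1) mod 3 then 1 else if b = a then 0 else -1)"

lemma col_lift_mod:
  assumes "a < 3" "b < 3"
  shows "(int a + col_lift a b) mod 3 = int b"
proof -
  have "a = 0 \<or> a = 1 \<or> a = 2" "b = 0 \<or> b = 1 \<or> b = 2" using assms by auto
  then show ?thesis unfolding col_lift_def by (elim disjE; simp)
qed

lemma abs_col_lift: "\<bar>col_lift a b\<bar> = of_bool (a \<noteq> b)"
proof -
  have "(a + 1) mod 3 \<noteq> a" by presburger
  then show ?thesis unfolding col_lift_def by auto
qed

lemma col_lift_same [simp]: "col_lift a a = 0"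
  using abs_col_lift[of a a] by simp

lemma abs_col_lift_le_1: "\<bar>col_lift a b\<bar> \<le> 1"
  by (simp add: abs_col_lift)

definition height :: "(nat \<Rightarrow> 'a \<Rightarrow> nat) \<Rightarrow> nat \<Rightarrow> 'a \<Rightarrow> int" where
  "height p t v = int (p 0 v) + (\<Sum>i<t. col_lift (p i v) (p (Suc i) v))"

lemma height_0 [simp]: "height p 0 v = int (p 0 v)"
  by (simp add: height_def)

lemma height_Suc: "height p (Suc t) v = height p t v + col_lift (p t v) (p (Suc t) v)"
  by (simp add: height_def)

lemma height_mod:
  assumes "recoloring_seq V E p k" "t \<le> k" "v \<in> V"
  shows "height p t v mod 3 = int (p t v)"
  using \<open>t \<le> k\<close>
proof (induction t)
  case (Suc t)
  have "p t v < 3" "p (Suc t) v < 3"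
    using recoloring_seq_less_3[OF assms(1) _ assms(3)] Suc.prems by simp_all
  then have "(height p t v mod 3 + col_lift (p t v) (p (Suc t) v)) mod 3 = int (p (Suc t) v)"
    using Suc col_lift_mod by simp
  then show ?case by (simp add: height_Suc mod_simps)
next
  case 0
  have "p 0 v < 3" using recoloring_seq_less_3[OF assms(1) _ assms(3)] by simp
  then show ?case by simp
qed

lemma div3_eq_if_close_nonmultiples:
  fixes d d' :: int
  assumes "\<not> 3 dvd d" "\<not> 3 dvd d'" "\<bar>d' - d\<bar> \<le> 1"
  shows "d' div 3 = d div 3"
  using assms by presburger

lemma close_if_div3_eq_nonmultiples:
  fixes d d' :: int
  assumes "\<not> 3 dvd d" "\<not> 3 dvd d'" "d' div 3 = d div 3"
  shows "\<bar>d' - d\<bar> \<le> 1"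
  using assms by presburger

lemma height_diff_not_3_dvd:
  assumes seq: "recoloring_seq V E p k" and "t \<le> k"
    and uv: "u \<in> V" "v \<in> V" "adj E u v"
  shows "\<not> 3 dvd (height p t u - height p t v)"
proof -
  have "p t u \<noteq> p t v"
    using colorings3_adj_neq[OF recoloring_seq_colorings3[OF seq \<open>t \<le> k\<close>]] uv .
  moreover have "p t u < 3" "p t v < 3"
    using recoloring_seq_less_3[OF seq \<open>t \<le> k\<close>] uv by auto
  ultimately have "\<not> 3 dvd (int (p t u) - int (p t v))" by presburger
  moreover have "(height p t u - height p t v) mod 3 = (int (p t u) - int (p t v)) mod 3"
    using height_mod[OF seq \<open>t \<le> k\<close>] uv by (metis mod_diff_eq)
  ultimately show ?thesis by (simp add: mod_eq_0_iff_dvd[symmetric])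
qed

lemma height_diff_div3_invariant:
  assumes seq: "recoloring_seq V E p k" and "finite V"
    and uv: "u \<in> V" "v \<in> V" "adj E u v" and "t \<le> k"
  shows "(height p t u - height p t v) div 3 = (height p 0 u - height p 0 v) div 3"
  using \<open>t \<le> k\<close>
proof (induction t)
  case (Suc t)
  have "col_adj V (p t) (p (Suc t))" using seq Suc.prems unfolding recoloring_seq_def by simp
  then have "p t u = p (Suc t) u \<or> p t v = p (Suc t) v"
    using col_adj_fixes_one_of \<open>finite V\<close> uv adj_def by metis
  then have "\<bar>(height p (Suc t) u - height p (Suc t) v) - (height p t u - height p t v)\<bar> \<le> 1"
    by (auto simp: height_Suc abs_col_lift_le_1)
  then have "(height p (Suc t) u - height p (Suc t) v) div 3 = (height p t u - height p t v) div 3"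
    using Suc.prems height_diff_not_3_dvd[OF seq _ uv]
    by (intro div3_eq_if_close_nonmultiples) auto
  with Suc show ?case by simp
qed simp

lemma height_change_adjacent_close:
  assumes seq: "recoloring_seq V E p k" and "finite V" and uv: "u \<in> V" "v \<in> V" "adj E u v"
  shows "\<bar>(height p k u - height p 0 u) - (height p k v - height p 0 v)\<bar> \<le> 1"
proof -
  have "\<bar>(height p k u - height p k v) - (height p 0 u - height p 0 v)\<bar> \<le> 1"
    using close_if_div3_eq_nonmultiples[OF height_diff_not_3_dvd[OF seq le0 uv]
        height_diff_not_3_dvd[OF seq order.refl uv] height_diff_div3_invariant[OF assms order.refl]] .
  then show ?thesis by (simp add: algebra_simps)
qed

lemma sum_abs_height_change_le:
  assumes "recoloring_seq V E p k" "finite V"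
  shows "(\<Sum>v\<in>V. \<bar>height p k v - height p 0 v\<bar>) \<le> int k"
proof -
  have "(\<Sum>v\<in>V. \<bar>height p k v - height p 0 v\<bar>)
      \<le> (\<Sum>v\<in>V. \<Sum>i<k. \<bar>col_lift (p i v) (p (Suc i) v)\<bar>)"
    unfolding height_def by (intro sum_mono) (simp add: sum_abs)
  also have "\<dots> = (\<Sum>i<k. \<Sum>v\<in>V. \<bar>col_lift (p i v) (p (Suc i) v)\<bar>)"
    by (rule sum.swap)
  also have "\<dots> = (\<Sum>i<k. 1)"
  proof (rule sum.cong[OF refl])
    fix i assume "i \<in> {..<k}"
    then have "col_adj V (p i) (p (Suc i))"
      using assms(1) unfolding recoloring_seq_def by simp
    then have "card (V \<inter> {v. p i v \<noteq> p (Suc i) v}) = 1"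
      unfolding col_adj_def by (simp add: Collect_conj_eq)
    then show "(\<Sum>v\<in>V. \<bar>col_lift (p i v) (p (Suc i) v)\<bar>) = 1"
      using \<open>finite V\<close> by (simp add: abs_col_lift)
  qed
  finally show ?thesis by simp
qed

lemma height_change_eq_shift:
  assumes sg: "simple_graph V E" and "connected_graph V E" and seq: "recoloring_seq V E p k"
    and shift: "\<forall>v\<in>V. p k v = (p 0 v + w v) mod 3" and w: "\<forall>v\<in>V. w v \<in> {1, 2}"
  obtains j where "\<forall>v\<in>V. height p k v - height p 0 v = int (w v) + 3 * j"
proof (cases "V = {}")
  case False
  then obtain r where "r \<in> V" by blast
  have fin: "finite V" using sg unfolding simple_graph_def by simp
  define D where "D v = height p k v - height p 0 v - int (w v)" for v
  have D_dvd: "3 dvd D v" if "v \<in> V" for v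
  proof -
    have "height p k v mod 3 = (height p 0 v + int (w v)) mod 3"
      using height_mod[OF seq order.refl that] shift that by (simp add: zmod_int)
    then show ?thesis unfolding D_def by (simp add: mod_eq_dvd_iff diff_diff_eq)
  qed
  have "D u = D v" if "u \<in> V" "v \<in> V" "adj E u v" for u v
  proof -
    have "\<bar>(height p k u - height p 0 u) - (height p k v - height p 0 v)\<bar> \<le> 1"
      using height_change_adjacent_close[OF seq fin that] .
    moreover have "w u \<in> {1, 2}" "w v \<in> {1, 2}" using w that(1,2) by auto
    then have "\<bar>int (w u) - int (w v)\<bar> \<le> 1" by auto
    ultimately have "\<bar>D u - D v\<bar> < 3" unfolding D_def by arith
    moreover have "3 dvd (D u - D v)" using D_dvd that(1,2) by simp
    ultimately show ?thesis using dvd_imp_le_int[of "D u - D v" 3] by fastforce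
  qed
  then have "D v = D r" if "v \<in> V" for v
    using connected_graph_locally_constant[OF sg \<open>connected_graph V E\<close>] \<open>r \<in> V\<close> that by blast
  moreover obtain j where "D r = 3 * j" using D_dvd[OF \<open>r \<in> V\<close>] by blast
  ultimately have "\<forall>v\<in>V. D v = 3 * j" by simp
  then show ?thesis using that[of j] unfolding D_def by (simp add: algebra_simps)
qed (use that in simp)

lemma col_walk_length_ge:
  assumes sg: "simple_graph V E" and "connected_graph V E" and "col_walk V E k f g"
    and "\<forall>v\<in>V. g v = (f v + w v) mod 3" "\<forall>v\<in>V. w v \<in> {1, 2}"
  obtains j where "(\<Sum>v\<in>V. \<bar>int (w v) + 3 * j\<bar>) \<le> int k"
proof -
  have fin: "finite V" using sg unfolding simple_graph_def by simp
  obtain p where seq: "recoloring_seq V E p k" and "p 0 = f" "p k = g"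
    using col_walk_recoloring_seq[OF assms(3)] .
  then obtain j where j: "\<forall>v\<in>V. height p k v - height p 0 v = int (w v) + 3 * j"
    using height_change_eq_shift[OF sg \<open>connected_graph V E\<close> seq] assms(4,5) by metis
  have "(\<Sum>v\<in>V. \<bar>int (w v) + 3 * j\<bar>) = (\<Sum>v\<in>V. \<bar>height p k v - height p 0 v\<bar>)"
    using j by simp
  also have "\<dots> \<le> int k" using sum_abs_height_change_le[OF seq fin] .
  finally show thesis by (rule that)
qed

lemma col_diam_ge_if_walks_long:
  assumes "f \<in> colorings3 V E" "g \<in> colorings3 V E" "\<And>k. col_walk V E k f g \<Longrightarrow> m \<le> k"
  shows "enat m \<le> col_diam V E"
proof -
  have "enat m \<le> col_dist V E f g"
    unfolding col_dist_def using assms(3) by (auto intro: INF_greatest)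
  also have "\<dots> \<le> col_diam V E"
    unfolding col_diam_def using assms(1,2) by (intro SUP_upper2[OF assms(1)] SUP_upper)
  finally show ?thesis .
qed

lemma sum_abs_two_valued_ge:
  fixes w :: "'a \<Rightarrow> nat" and j :: int
  assumes "finite V" "S \<subseteq> V" "card S \<le> card (V - S)"
    and "\<forall>v\<in>S. w v = 1" "\<forall>v\<in>V - S. w v = 2"
  shows "int (2 * card S + card (V - S)) \<le> (\<Sum>v\<in>V. \<bar>int (w v) + 3 * j\<bar>)"
proof -
  have "(\<Sum>v\<in>V. \<bar>int (w v) + 3 * j\<bar>)
      = (\<Sum>v\<in>V - S. \<bar>int (w v) + 3 * j\<bar>) + (\<Sum>v\<in>S. \<bar>int (w v) + 3 * j\<bar>)"
    using sum.subset_diff[OF assms(2,1)] .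
  also have "\<dots> = int (card (V - S)) * \<bar>2 + 3 * j\<bar> + int (card S) * \<bar>1 + 3 * j\<bar>"
    using assms(4,5) by simp
  finally have sum: "(\<Sum>v\<in>V. \<bar>int (w v) + 3 * j\<bar>)
      = int (card S) * \<bar>1 + 3 * j\<bar> + int (card (V - S)) * \<bar>2 + 3 * j\<bar>" by simp
  show ?thesis
  proof (cases "j = 0")
    case True
    then show ?thesis unfolding sum using assms(3) by simp
  next
    case False
    then have "2 \<le> \<bar>1 + 3 * j\<bar>" "1 \<le> \<bar>2 + 3 * j\<bar>" by presburger+
    then have "int (card S) * 2 \<le> int (card S) * \<bar>1 + 3 * j\<bar>"
      "int (card (V - S)) * 1 \<le> int (card (V - S)) * \<bar>2 + 3 * j\<bar>"
      by (intro mult_left_mono; simp)+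
    then show ?thesis unfolding sum by simp
  qed
qed

theorem mainTheorem11:
  fixes V :: "'a set" and E :: "'a set set" and n :: nat
  assumes "tree V E" and "card V = n"
  shows "enat ((3 * n) div 2) \<le> col_diam V E"
proof -
  have sg: "simple_graph V E" and "connected_graph V E" and "acyclic_graph V E"
    using assms(1) unfolding tree_def by auto
  then have fin: "finite V" unfolding simple_graph_def by simp
  obtain S where S: "S \<subseteq> V" "card S = n div 2"
    using obtain_subset_with_card_n[of "n div 2" V] assms(2) by auto
  then have card_diff: "card (V - S) = n - n div 2"
    using card_Diff_subset fin assms(2) finite_subset by metis
  define w :: "'a \<Rightarrow> nat" where "w v = (if v \<in> S then 1 else 2)" for v
  obtain f g where fg: "f \<in> colorings3 V E" "g \<in> colorings3 V E" "\<forall>v\<in>V. g v = (f v + w v) mod 3"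
    using shifted_colorings3_exist[OF sg \<open>acyclic_graph V E\<close>] by metis
  have w: "\<forall>v\<in>V. w v \<in> {1, 2}" by (simp add: w_def)
  show ?thesis
  proof (rule col_diam_ge_if_walks_long[OF fg(1,2)])
    fix k assume "col_walk V E k f g"
    then obtain j where j: "(\<Sum>v\<in>V. \<bar>int (w v) + 3 * j\<bar>) \<le> int k"
      using col_walk_length_ge[OF sg \<open>connected_graph V E\<close> _ fg(3) w] by blast
    have "(3 * n) div 2 = n + n div 2" by presburger
    then have "int ((3 * n) div 2) = int (2 * card S + card (V - S))"
      unfolding S(2) card_diff by simp
    also have "\<dots> \<le> (\<Sum>v\<in>V. \<bar>int (w v) + 3 * j\<bar>)"
      using fin S card_diff by (intro sum_abs_two_valued_ge) (auto simp: w_def)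
    finally show "(3 * n) div 2 \<le> k" using j by linarith
  qed
qed

end
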